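(* Let $n\in\mathbb{N}$, $a<b$, and let $f\colon[a,b]\to\mathbb{R}$ be such that $f^{(n-1)}$ is absolutely continuous and $f^{(n)}\in L^\infty([a,b])$. Define $$E_n(f)=\int_a^b f(x)\,dx-\frac{1}{n!}\sum_{k=0}^{n-1}\left[\frac{(b-a)^{k+1}(2n-k)!\,(n-k-1)!}{2^{2k+2}(2n-2k-1)!\,(k+1)!}\right]\left[f^{(k)}(a)+(-1)^{k}f^{(k)}(b)\right].$$ Then $$|E_n(f)|\leq \frac{\|f^{(n)}\|_\infty (b-a)^{n+1}}{2^{2n}n!},$$ and this estimate is sharp in the sense that the coefficient of $\|f^{(n)}\|_\infty$ cannot be reduced.
   Context: $\|g\|_\infty$ is the essential supremum of $|g|$ on $[a,b]$. *)

theory Defs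
  imports "HOL-Analysis.Analysis" "HOL-Probability.Essential_Supremum"
begin

definition abs_cont_on :: "real \<Rightarrow> real \<Rightarrow> (real \<Rightarrow> real) \<Rightarrow> bool" where
  "abs_cont_on a b g \<longleftrightarrow>
     (\<forall>e>0. \<exists>d>0. \<forall>(m::nat) (u::nat \<Rightarrow> real) v.
        (\<forall>i<m. a \<le> u i \<and> u i \<le> v i \<and> v i \<le> b) \<and>
        (\<forall>i<m. \<forall>j<m. i \<noteq> j \<longrightarrow> v i \<le> u j \<or> v j \<le> u i) \<and>
        (\<Sum>i<m. v i - u i) < d
        \<longrightarrow> (\<Sum>i<m. \<bar>g (v i) - g (u i)\<bar>) < e)"

definition Linf_norm :: "real \<Rightarrow> real \<Rightarrow> (real \<Rightarrow> real) \<Rightarrow> ereal" where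
  "Linf_norm a b g = esssup (lebesgue_on {a..b}) (\<lambda>x. ereal \<bar>g x\<bar>)"

definition in_Linf :: "real \<Rightarrow> real \<Rightarrow> (real \<Rightarrow> real) \<Rightarrow> bool" where
  "in_Linf a b g \<longleftrightarrow> g \<in> borel_measurable (lebesgue_on {a..b}) \<and> Linf_norm a b g < \<infinity>"

text \<open>D k plays the role of f^(k), k = 0..n: D 0 = f on [a,b]; D k is the (one-sided at the
  endpoints) derivative of D (k-1) on [a,b] for k \<le> n-1; D (n-1) is absolutely continuous
  on [a,b]; D n is its derivative almost everywhere on [a,b] and lies in L^infinity.\<close>
definition deriv_hyp :: "nat \<Rightarrow> real \<Rightarrow> real \<Rightarrow> (real \<Rightarrow> real) \<Rightarrow> (nat \<Rightarrow> real \<Rightarrow> real) \<Rightarrow> bool" where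
  "deriv_hyp n a b f D \<longleftrightarrow>
     (\<forall>x\<in>{a..b}. D 0 x = f x) \<and>
     (\<forall>k. Suc k < n \<longrightarrow> (\<forall>x\<in>{a..b}. (D k has_real_derivative D (Suc k) x) (at x within {a..b}))) \<and>
     abs_cont_on a b (D (n - 1)) \<and>
     (AE x in lebesgue_on {a..b}. (D (n - 1) has_real_derivative D n x) (at x within {a..b})) \<and>
     in_Linf a b (D n)"

definition E_n :: "nat \<Rightarrow> real \<Rightarrow> real \<Rightarrow> (real \<Rightarrow> real) \<Rightarrow> (nat \<Rightarrow> real \<Rightarrow> real) \<Rightarrow> real" where
  "E_n n a b f D = integral {a..b} f
     - (1 / fact n) * (\<Sum>k<n.
         ((b - a) ^ (k + 1) * fact (2 * n - k) * fact (n - k - 1)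
           / (2 ^ (2 * k + 2) * fact (2 * n - 2 * k - 1) * fact (k + 1)))
         * (D k a + (-1) ^ k * D k b))"

end

theory Submission
  imports Defs
begin

text \<open>Let U_n be the Chebyshev polynomial of the second kind and
  P_0(t) = ((b - a)/4)^n U_n((2t - a - b)/(b - a)). Integrating by parts n times gives
  \<integral>_a^b P_0 f^(n) = (-1)^n n! E_n(f): the n-th derivative of P_0 is n!, which produces \<integral>f, and
  the boundary terms are values of derivatives of U_n at \<plusminus>1, which are exactly the weights
  in E_n. Hence n! |E_n(f)| \<le> \<parallel>f^(n)\<parallel>_\<infinity> \<integral>|P_0|, and the substitution y = cos \<theta> turns
  \<integral>_{-1}^1 |U_n| into \<integral>_0^\<pi> |sin((n+1)\<theta>)| = 2, so \<integral>|P_0| = (b - a)^(n+1)/4^n.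
  Equality holds for the n-fold integral of sgn P_0.

  Since f^(n-1) is only absolutely continuous, the integration by parts needs the fundamental
  theorem of calculus for absolutely continuous functions with an a.e. derivative. In the gauge
  integral, tags outside the exceptional null set are controlled by the derivative, and the
  intervals tagged inside it have small total length, so absolute continuity controls them.\<close>

hide_const (open) Polynomial.content \<comment> \<open>keep \<open>content\<close> for the measure of intervals\<close>

section \<open>Absolute continuity\<close>

definition nonoverlapping_family :: "real \<Rightarrow> real \<Rightarrow> nat \<Rightarrow> (nat \<Rightarrow> real) \<Rightarrow> (nat \<Rightarrow> real) \<Rightarrow> bool" where
  "nonoverlapping_family a b m u v \<longleftrightarrow>
     (\<forall>i<m. a \<le> u i \<and> u i \<le> v i \<and> v i \<le> b) \<and>
     (\<forall>i<m. \<forall>j<m. i \<noteq> j \<longrightarrow> v i \<le> u j \<or> v j \<le> u i)"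

lemma abs_cont_on_iff:
  "abs_cont_on a b g \<longleftrightarrow>
     (\<forall>e>0. \<exists>d>0. \<forall>m u v. nonoverlapping_family a b m u v \<longrightarrow> (\<Sum>i<m. v i - u i) < d
        \<longrightarrow> (\<Sum>i<m. \<bar>g (v i) - g (u i)\<bar>) < e)"
  unfolding abs_cont_on_def nonoverlapping_family_def by (simp only: imp_conjL)

lemma abs_cont_onI:
  assumes "\<And>e. e > 0 \<Longrightarrow> \<exists>d>0. \<forall>m u v. nonoverlapping_family a b m u v \<longrightarrow> (\<Sum>i<m. v i - u i) < d
             \<longrightarrow> (\<Sum>i<m. \<bar>g (v i) - g (u i)\<bar>) < e"
  shows "abs_cont_on a b g"
  using assms unfolding abs_cont_on_iff by blast

lemma abs_cont_onE:
  assumes "abs_cont_on a b g" and "e > 0"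
  obtains d where "d > 0"
    "\<And>m u v. nonoverlapping_family a b m u v \<Longrightarrow> (\<Sum>i<m. v i - u i) < d
       \<Longrightarrow> (\<Sum>i<m. \<bar>g (v i) - g (u i)\<bar>) < e"
  using assms unfolding abs_cont_on_iff by blast

lemma nonoverlapping_family_mem:
  "nonoverlapping_family a b m u v \<Longrightarrow> i < m \<Longrightarrow> u i \<in> {a..b} \<and> v i \<in> {a..b} \<and> u i \<le> v i"
  unfolding nonoverlapping_family_def by auto

lemma abs_cont_on_imp_continuous_on:
  assumes "abs_cont_on a b g"
  shows "continuous_on {a..b} g"
  unfolding continuous_on_iff
proof (intro ballI allI impI)
  fix x e :: real assume x: "x \<in> {a..b}" and "e > 0"
  obtain d where "d > 0" and d: "\<And>m u v. nonoverlapping_family a b m u v \<Longrightarrow>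
      (\<Sum>i<m. v i - u i) < d \<Longrightarrow> (\<Sum>i<m. \<bar>g (v i) - g (u i)\<bar>) < e"
    using abs_cont_onE[OF assms \<open>e > 0\<close>] by blast
  have "dist (g y) (g x) < e" if y: "y \<in> {a..b}" and xy: "dist y x < d" for y
  proof -
    have "nonoverlapping_family a b 1 (\<lambda>_. min x y) (\<lambda>_. max x y)"
      using x y by (auto simp: nonoverlapping_family_def)
    moreover have "(\<Sum>i<(1::nat). max x y - min x y) < d"
      using xy by (auto simp: dist_real_def max_def min_def abs_real_def split: if_splits)
    ultimately have "\<bar>g (max x y) - g (min x y)\<bar> < e"
      using d by fastforce
    then show ?thesis
      by (cases "x \<le> y") (auto simp: dist_real_def max_def abs_minus_commute)
  qed
  then show "\<exists>d>0. \<forall>y\<in>{a..b}. dist y x < d \<longrightarrow> dist (g y) (g x) < e"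
    using \<open>d > 0\<close> by blast
qed

lemma lipschitz_on_imp_abs_cont_on:
  assumes "L-lipschitz_on {a..b} g"
  shows "abs_cont_on a b g"
proof (rule abs_cont_onI)
  fix e :: real assume e: "e > 0"
  have L: "L \<ge> 0" using assms by (rule lipschitz_on_nonneg)
  have "(\<Sum>i<m. \<bar>g (v i) - g (u i)\<bar>) < e"
    if uv: "nonoverlapping_family a b m u v" and small: "(\<Sum>i<m. v i - u i) < e / (L + 1)" for m u v
  proof -
    have "(\<Sum>i<m. \<bar>g (v i) - g (u i)\<bar>) \<le> (\<Sum>i<m. L * (v i - u i))"
      using lipschitz_onD[OF assms] nonoverlapping_family_mem[OF uv]
      by (intro sum_mono) (force simp: dist_real_def)
    also have "\<dots> = L * (\<Sum>i<m. v i - u i)" by (simp add: sum_distrib_left)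
    also have "\<dots> \<le> L * (e / (L + 1))" using small L by (intro mult_left_mono) auto
    also have "\<dots> < e" using e L by (simp add: field_simps)
    finally show ?thesis .
  qed
  moreover have "e / (L + 1) > 0" using e L by simp
  ultimately show "\<exists>d>0. \<forall>m u v. nonoverlapping_family a b m u v \<longrightarrow> (\<Sum>i<m. v i - u i) < d
             \<longrightarrow> (\<Sum>i<m. \<bar>g (v i) - g (u i)\<bar>) < e"
    by blast
qed

lemma abs_cont_on_const: "abs_cont_on a b (\<lambda>x. c)"
  by (rule lipschitz_on_imp_abs_cont_on[of 0]) (simp add: lipschitz_on_def)

lemma abs_cont_on_has_derivative_continuous:
  assumes "\<And>x. x \<in> {a..b} \<Longrightarrow> (g has_real_derivative g' x) (at x within {a..b})"
    and "continuous_on {a..b} g'"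
  shows "abs_cont_on a b g"
proof -
  obtain B where "\<forall>y\<in>g' ` {a..b}. norm y \<le> B"
    using compact_imp_bounded[OF compact_continuous_image[OF assms(2) compact_Icc]]
    unfolding bounded_iff by blast
  then have "\<bar>g x - g y\<bar> \<le> max B 0 * \<bar>x - y\<bar>" if "x \<in> {a..b}" "y \<in> {a..b}" for x y
    using field_differentiable_bound[OF convex_real_interval(5) assms(1), of "max B 0" x y]
      \<open>\<forall>y\<in>g' ` {a..b}. norm y \<le> B\<close> that by force
  then have "(max B 0)-lipschitz_on {a..b} g"
    by (intro lipschitz_onI) (auto simp: dist_real_def)
  then show ?thesis by (rule lipschitz_on_imp_abs_cont_on)
qed

lemma abs_cont_on_add:
  assumes f: "abs_cont_on a b f" and g: "abs_cont_on a b g"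
  shows "abs_cont_on a b (\<lambda>x. f x + g x)"
proof (rule abs_cont_onI)
  fix e :: real assume "e > 0"
  obtain d1 where "d1 > 0"
    and d1: "\<And>m u v. nonoverlapping_family a b m u v \<Longrightarrow> (\<Sum>i<m. v i - u i) < d1
       \<Longrightarrow> (\<Sum>i<m. \<bar>f (v i) - f (u i)\<bar>) < e/2"
    using abs_cont_onE[OF f half_gt_zero[OF \<open>e > 0\<close>]] by blast
  obtain d2 where "d2 > 0"
    and d2: "\<And>m u v. nonoverlapping_family a b m u v \<Longrightarrow> (\<Sum>i<m. v i - u i) < d2
       \<Longrightarrow> (\<Sum>i<m. \<bar>g (v i) - g (u i)\<bar>) < e/2"
    using abs_cont_onE[OF g half_gt_zero[OF \<open>e > 0\<close>]] by blast
  have "(\<Sum>i<m. \<bar>(f (v i) + g (v i)) - (f (u i) + g (u i))\<bar>) < e"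
    if "nonoverlapping_family a b m u v" "(\<Sum>i<m. v i - u i) < min d1 d2" for m u v
  proof -
    have "(\<Sum>i<m. \<bar>(f (v i) + g (v i)) - (f (u i) + g (u i))\<bar>) \<le>
          (\<Sum>i<m. \<bar>f (v i) - f (u i)\<bar>) + (\<Sum>i<m. \<bar>g (v i) - g (u i)\<bar>)"
      unfolding sum.distrib[symmetric] by (rule sum_mono) linarith
    also have "\<dots> < e" using d1[OF that(1)] d2[OF that(1)] that(2) by simp
    finally show ?thesis .
  qed
  then show "\<exists>d>0. \<forall>m u v. nonoverlapping_family a b m u v \<longrightarrow> (\<Sum>i<m. v i - u i) < d
             \<longrightarrow> (\<Sum>i<m. \<bar>(f (v i) + g (v i)) - (f (u i) + g (u i))\<bar>) < e"
    using \<open>d1 > 0\<close> \<open>d2 > 0\<close> by (intro exI[of _ "min d1 d2"]) auto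
qed

lemma abs_cont_on_sum:
  assumes "\<And>i. i \<in> I \<Longrightarrow> abs_cont_on a b (f i)"
  shows "abs_cont_on a b (\<lambda>x. \<Sum>i\<in>I. f i x)"
proof (cases "finite I")
  case True
  then show ?thesis using assms
    by (induction I rule: finite_induct) (auto intro: abs_cont_on_const abs_cont_on_add)
qed (simp add: abs_cont_on_const)

lemma abs_cont_on_bounded:
  assumes "abs_cont_on a b f"
  obtains B where "B \<ge> 0" "\<And>x. x \<in> {a..b} \<Longrightarrow> \<bar>f x\<bar> \<le> B"
proof -
  have "bounded (f ` {a..b})"
    using abs_cont_on_imp_continuous_on[OF assms] by (auto intro: compact_imp_bounded compact_continuous_image)
  then obtain B where "\<forall>x\<in>{a..b}. \<bar>f x\<bar> \<le> B"
    unfolding bounded_iff by auto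
  then show ?thesis using that[of "max B 0"] by force
qed

lemma abs_mult_diff_le:
  fixes x y x' y' :: real
  assumes "\<bar>x\<bar> \<le> Bx" and "\<bar>y'\<bar> \<le> By"
  shows "\<bar>x' * y' - x * y\<bar> \<le> By * \<bar>x' - x\<bar> + Bx * \<bar>y' - y\<bar>"
proof -
  have "\<bar>x' * y' - x * y\<bar> = \<bar>(x' - x) * y' + x * (y' - y)\<bar>"
    by (simp add: algebra_simps)
  also have "\<dots> \<le> \<bar>x' - x\<bar> * \<bar>y'\<bar> + \<bar>x\<bar> * \<bar>y' - y\<bar>"
    by (metis abs_mult abs_triangle_ineq)
  also have "\<dots> \<le> \<bar>x' - x\<bar> * By + Bx * \<bar>y' - y\<bar>"
    using assms by (intro add_mono mult_left_mono mult_right_mono) auto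
  finally show ?thesis by (simp add: mult.commute)
qed

lemma abs_cont_on_mult:
  assumes f: "abs_cont_on a b f" and g: "abs_cont_on a b g"
  shows "abs_cont_on a b (\<lambda>x. f x * g x)"
proof (rule abs_cont_onI)
  fix e :: real assume e: "e > 0"
  obtain Bf Bg where "Bf \<ge> 0" "Bg \<ge> 0"
    and Bf: "\<And>x. x \<in> {a..b} \<Longrightarrow> \<bar>f x\<bar> \<le> Bf" and Bg: "\<And>x. x \<in> {a..b} \<Longrightarrow> \<bar>g x\<bar> \<le> Bg"
    using abs_cont_on_bounded[OF f] abs_cont_on_bounded[OF g] by metis
  define ef eg where "ef = e / (2 * (Bg + 1))" and "eg = e / (2 * (Bf + 1))"
  have "ef > 0" "eg > 0" using e \<open>Bf \<ge> 0\<close> \<open>Bg \<ge> 0\<close> by (auto simp: ef_def eg_def)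
  obtain d1 where "d1 > 0"
    and d1: "\<And>m u v. nonoverlapping_family a b m u v \<Longrightarrow> (\<Sum>i<m. v i - u i) < d1
       \<Longrightarrow> (\<Sum>i<m. \<bar>f (v i) - f (u i)\<bar>) < ef"
    using abs_cont_onE[OF f \<open>ef > 0\<close>] by blast
  obtain d2 where "d2 > 0"
    and d2: "\<And>m u v. nonoverlapping_family a b m u v \<Longrightarrow> (\<Sum>i<m. v i - u i) < d2
       \<Longrightarrow> (\<Sum>i<m. \<bar>g (v i) - g (u i)\<bar>) < eg"
    using abs_cont_onE[OF g \<open>eg > 0\<close>] by blast
  have "(\<Sum>i<m. \<bar>f (v i) * g (v i) - f (u i) * g (u i)\<bar>) < e"
    if uv: "nonoverlapping_family a b m u v" and small: "(\<Sum>i<m. v i - u i) < min d1 d2" for m u v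
  proof -
    have "(\<Sum>i<m. \<bar>f (v i) * g (v i) - f (u i) * g (u i)\<bar>)
        \<le> Bg * (\<Sum>i<m. \<bar>f (v i) - f (u i)\<bar>) + Bf * (\<Sum>i<m. \<bar>g (v i) - g (u i)\<bar>)"
      unfolding sum_distrib_left sum.distrib[symmetric]
      using nonoverlapping_family_mem[OF uv] Bf Bg by (intro sum_mono abs_mult_diff_le) auto
    also have "\<dots> \<le> Bg * ef + Bf * eg"
      using d1[OF uv] d2[OF uv] small \<open>Bf \<ge> 0\<close> \<open>Bg \<ge> 0\<close>
      by (intro add_mono mult_left_mono) auto
    also have "\<dots> < e/2 + e/2"
      using e \<open>Bf \<ge> 0\<close> \<open>Bg \<ge> 0\<close>
      by (intro add_strict_mono) (simp_all add: ef_def eg_def field_simps)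
    finally show ?thesis by simp
  qed
  then show "\<exists>d>0. \<forall>m u v. nonoverlapping_family a b m u v \<longrightarrow> (\<Sum>i<m. v i - u i) < d
             \<longrightarrow> (\<Sum>i<m. \<bar>f (v i) * g (v i) - f (u i) * g (u i)\<bar>) < e"
    using \<open>d1 > 0\<close> \<open>d2 > 0\<close> by (intro exI[of _ "min d1 d2"]) auto
qed

section \<open>The fundamental theorem of calculus for absolutely continuous functions\<close>

lemma interiors_disjoint_imp_nonoverlapping:
  fixes u v u' v' :: real
  assumes "u < v" "u' < v'" "{u<..<v} \<inter> {u'<..<v'} = {}"
  shows "v \<le> u' \<or> v' \<le> u"
proof (rule ccontr)
  assume "\<not> (v \<le> u' \<or> v' \<le> u)"
  then have "(max u u' + min v v') / 2 \<in> {u<..<v} \<inter> {u'<..<v'}"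
    using assms(1,2) by auto
  then show False using assms(3) by blast
qed

lemma tagged_division_of_real_elem:
  assumes "p tagged_division_of {a..b::real}" and "(x, K) \<in> p"
  shows "K = {Inf K..Sup K}" "a \<le> Inf K" "Inf K \<le> Sup K" "Sup K \<le> b" "x \<in> K"
    "content K = Sup K - Inf K" "interior K = {Inf K<..<Sup K}"
proof -
  obtain u v where K: "K = cbox u v" using tagged_division_ofD(4)[OF assms] by blast
  have "x \<in> K" "K \<subseteq> {a..b}" using tagged_division_ofD(2,3)[OF assms] by auto
  then show "K = {Inf K..Sup K}" "a \<le> Inf K" "Inf K \<le> Sup K" "Sup K \<le> b" "x \<in> K"
    "content K = Sup K - Inf K" "interior K = {Inf K<..<Sup K}"
    unfolding K by auto
qed

lemma tagged_division_nonoverlapping_family: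
  assumes p: "p tagged_division_of {a..b::real}" and "q \<subseteq> p"
    and nondegenerate: "\<And>x K. (x, K) \<in> q \<Longrightarrow> Inf K < Sup K"
  obtains h where "bij_betw h {..<card q} q"
    "nonoverlapping_family a b (card q) (\<lambda>i. Inf (snd (h i))) (\<lambda>i. Sup (snd (h i)))"
proof -
  note elem = tagged_division_of_real_elem[OF p]
  have "finite q" using \<open>q \<subseteq> p\<close> p finite_subset by blast
  then obtain h where h: "bij_betw h {..<card q} q"
    using ex_bij_betw_nat_finite lessThan_atLeast0 by metis
  have hp: "(fst (h i), snd (h i)) \<in> p" "Inf (snd (h i)) < Sup (snd (h i))" if "i < card q" for i
  proof -
    have "h i \<in> q" using h that by (auto simp: bij_betw_def)
    then show "(fst (h i), snd (h i)) \<in> p" "Inf (snd (h i)) < Sup (snd (h i))"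
      using \<open>q \<subseteq> p\<close> nondegenerate[of "fst (h i)" "snd (h i)"] by auto
  qed
  have "a \<le> Inf (snd (h i)) \<and> Inf (snd (h i)) \<le> Sup (snd (h i)) \<and> Sup (snd (h i)) \<le> b"
    if "i < card q" for i
    using elem(2-4)[OF hp(1)[OF that]] by simp
  moreover have "Sup (snd (h i)) \<le> Inf (snd (h j)) \<or> Sup (snd (h j)) \<le> Inf (snd (h i))"
    if ij: "i < card q" "j < card q" "i \<noteq> j" for i j
  proof -
    have "h i \<noteq> h j" using h ij by (auto simp: bij_betw_def inj_on_def)
    then have "interior (snd (h i)) \<inter> interior (snd (h j)) = {}"
      using tagged_division_ofD(5)[OF p hp(1)[OF ij(1)] hp(1)[OF ij(2)]] by (simp add: prod_eq_iff)
    then show ?thesis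
      using interiors_disjoint_imp_nonoverlapping[OF hp(2)[OF ij(1)] hp(2)[OF ij(2)]]
      unfolding elem(7)[OF hp(1)[OF ij(1)]] elem(7)[OF hp(1)[OF ij(2)]] by blast
  qed
  ultimately show ?thesis
    using that[OF h] unfolding nonoverlapping_family_def by blast
qed

lemma abs_cont_on_tagged_subdivision:
  assumes "abs_cont_on a b F" and "e > 0"
  obtains d where "d > 0"
    "\<And>p q. p tagged_division_of {a..b} \<Longrightarrow> q \<subseteq> p \<Longrightarrow> (\<Sum>(x, K)\<in>q. content K) < d
       \<Longrightarrow> (\<Sum>(x, K)\<in>q. \<bar>F (Sup K) - F (Inf K)\<bar>) < e"
proof -
  obtain d where "d > 0" and d: "\<And>m u v. nonoverlapping_family a b m u v \<Longrightarrow>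
      (\<Sum>i<m. v i - u i) < d \<Longrightarrow> (\<Sum>i<m. \<bar>F (v i) - F (u i)\<bar>) < e"
    using abs_cont_onE[OF assms] by blast
  show ?thesis
  proof (rule that[OF \<open>d > 0\<close>])
    fix p q assume p: "p tagged_division_of {a..b}" and "q \<subseteq> p"
      and small: "(\<Sum>(x, K)\<in>q. content K) < d"
    note elem = tagged_division_of_real_elem[OF p]
    have "finite q" using \<open>q \<subseteq> p\<close> p finite_subset by blast
    \<comment> \<open>Degenerate intervals contribute nothing but could break nonoverlapping, so drop them.\<close>
    define q' where "q' = {(x, K) \<in> q. Inf K < Sup K}"
    have "q' \<subseteq> q" by (auto simp: q'_def)
    then have "q' \<subseteq> p" using \<open>q \<subseteq> p\<close> by blast
    then obtain h where h: "bij_betw h {..<card q'} q'"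
      and family: "nonoverlapping_family a b (card q') (\<lambda>i. Inf (snd (h i))) (\<lambda>i. Sup (snd (h i)))"
      using tagged_division_nonoverlapping_family[OF p] by (auto simp: q'_def)
    have "(\<Sum>i<card q'. Sup (snd (h i)) - Inf (snd (h i))) = (\<Sum>(x, K)\<in>q'. Sup K - Inf K)"
      using sum.reindex_bij_betw[OF h, of "\<lambda>(x, K). Sup K - Inf K"] by (simp add: split_def)
    also have "\<dots> = (\<Sum>(x, K)\<in>q'. content K)"
      using \<open>q' \<subseteq> p\<close> elem(6) by (intro sum.cong) auto
    also have "\<dots> \<le> (\<Sum>(x, K)\<in>q. content K)"
      using \<open>finite q\<close> \<open>q' \<subseteq> q\<close> by (intro sum_mono2) auto
    finally have "(\<Sum>i<card q'. \<bar>F (Sup (snd (h i))) - F (Inf (snd (h i)))\<bar>) < e"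
      using d[OF family] small by simp
    also have "(\<Sum>i<card q'. \<bar>F (Sup (snd (h i))) - F (Inf (snd (h i)))\<bar>)
        = (\<Sum>(x, K)\<in>q'. \<bar>F (Sup K) - F (Inf K)\<bar>)"
      using sum.reindex_bij_betw[OF h, of "\<lambda>(x, K). \<bar>F (Sup K) - F (Inf K)\<bar>"] by (simp add: split_def)
    also have "\<dots> = (\<Sum>(x, K)\<in>q. \<bar>F (Sup K) - F (Inf K)\<bar>)"
    proof (rule sum.mono_neutral_left[OF \<open>finite q\<close> \<open>q' \<subseteq> q\<close>], safe)
      fix x K assume "(x, K) \<in> q" "(x, K) \<notin> q'"
      then have "Inf K = Sup K"
        using elem(3) \<open>q \<subseteq> p\<close> by (force simp: q'_def)
      then show "\<bar>F (Sup K) - F (Inf K)\<bar> = 0" by simp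
    qed
    finally show "(\<Sum>(x, K)\<in>q. \<bar>F (Sup K) - F (Inf K)\<bar>) < e" .
  qed
qed

lemma has_real_derivative_uniform_gauge:
  assumes "\<And>x. x \<in> S \<Longrightarrow> (F has_real_derivative f x) (at x within T)" and "e > 0"
  obtains \<delta> where "\<And>x. \<delta> x > 0"
    "\<And>x y. x \<in> S \<Longrightarrow> y \<in> T \<Longrightarrow> \<bar>y - x\<bar> < \<delta> x
       \<Longrightarrow> \<bar>F y - F x - (y - x) * f x\<bar> \<le> e * \<bar>y - x\<bar>"
proof -
  have "\<exists>\<delta>>0. x \<in> S \<longrightarrow> (\<forall>y\<in>T. \<bar>y - x\<bar> < \<delta> \<longrightarrow> \<bar>F y - F x - (y - x) * f x\<bar> \<le> e * \<bar>y - x\<bar>)"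
    for x
  proof (cases "x \<in> S")
    case True
    then have "(F has_derivative (*) (f x)) (at x within T)"
      using assms(1) by (simp add: has_field_derivative_def)
    then show ?thesis
      unfolding has_derivative_within_alt using \<open>e > 0\<close> by (fastforce simp: mult.commute)
  qed (auto intro: exI[of _ 1])
  then show ?thesis using that by metis
qed

lemma negligible_tagged_content_small:
  assumes "negligible N" and "d > 0"
  obtains \<gamma> where "gauge \<gamma>"
    "\<And>p. p tagged_division_of {a..b::real} \<Longrightarrow> \<gamma> fine p
       \<Longrightarrow> (\<Sum>(x, K)\<in>p. content K * indicator N x) < d"
proof -
  have "(indicator N has_integral (0::real)) {a..b}"
    using assms(1) unfolding negligible_def by (metis box_real(2))
  then show ?thesis
    using that \<open>d > 0\<close> unfolding has_integral_real by (fastforce simp: split_def)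
qed

lemma straddle_estimate:
  fixes F :: "real \<Rightarrow> real"
  assumes "u \<le> x" "x \<le> v"
    and "\<bar>F u - F x - (u - x) * c\<bar> \<le> e * \<bar>u - x\<bar>" "\<bar>F v - F x - (v - x) * c\<bar> \<le> e * \<bar>v - x\<bar>"
  shows "\<bar>(v - u) * c - (F v - F u)\<bar> \<le> e * (v - u)"
proof -
  have "\<bar>(v - u) * c - (F v - F u)\<bar> = \<bar>(F u - F x - (u - x) * c) - (F v - F x - (v - x) * c)\<bar>"
    by (simp add: algebra_simps)
  also have "\<dots> \<le> e * \<bar>u - x\<bar> + e * \<bar>v - x\<bar>" using assms(3,4) by linarith
  also have "\<dots> = e * (v - u)" using assms(1,2) by (simp add: algebra_simps)
  finally show ?thesis .
qed

lemma tagged_division_derivative_error: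
  fixes F f :: "real \<Rightarrow> real"
  assumes p: "p tagged_division_of {a..b}" and "a \<le> b" and "0 \<le> e"
    and fine: "(\<lambda>x. ball x (\<delta> x)) fine p"
    and \<delta>: "\<And>x y. x \<in> {a..b} - N \<Longrightarrow> y \<in> {a..b} \<Longrightarrow> \<bar>y - x\<bar> < \<delta> x
       \<Longrightarrow> \<bar>F y - F x - (y - x) * f x\<bar> \<le> e * \<bar>y - x\<bar>"
  shows "\<bar>\<Sum>(x, K)\<in>{(x, K) \<in> p. x \<notin> N}. content K * f x - (F (Sup K) - F (Inf K))\<bar> \<le> e * (b - a)"
proof -
  note elem = tagged_division_of_real_elem[OF p]
  have "finite p" using p by blast
  have "\<bar>\<Sum>(x, K)\<in>{(x, K) \<in> p. x \<notin> N}. content K * f x - (F (Sup K) - F (Inf K))\<bar>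
      \<le> (\<Sum>(x, K)\<in>{(x, K) \<in> p. x \<notin> N}. e * content K)"
  proof (rule order_trans[OF sum_abs sum_mono], clarify)
    fix x K assume xK: "(x, K) \<in> p" "x \<notin> N"
    have "Inf K \<le> x" "x \<le> Sup K" using elem(1,5)[OF xK(1)] by (metis atLeastAtMost_iff)+
    then have x: "x \<in> {a..b} - N" using elem(2-4)[OF xK(1)] xK by auto
    have "{Inf K..Sup K} \<subseteq> ball x (\<delta> x)"
      using fineD[OF fine xK(1)] elem(1)[OF xK(1)] by blast
    then have near: "\<bar>y - x\<bar> < \<delta> x" if "y \<in> {Inf K, Sup K}" for y
      using that elem(3)[OF xK(1)] by (auto simp: dist_real_def abs_minus_commute)
    have "Inf K \<in> {a..b}" "Sup K \<in> {a..b}" using elem(2-4)[OF xK(1)] by auto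
    then have "\<bar>F y - F x - (y - x) * f x\<bar> \<le> e * \<bar>y - x\<bar>" if "y \<in> {Inf K, Sup K}" for y
      using \<delta>[OF x] near[OF that] that by blast
    then have "\<bar>(Sup K - Inf K) * f x - (F (Sup K) - F (Inf K))\<bar> \<le> e * (Sup K - Inf K)"
      using straddle_estimate[OF \<open>Inf K \<le> x\<close> \<open>x \<le> Sup K\<close>] by blast
    then show "\<bar>content K * f x - (F (Sup K) - F (Inf K))\<bar> \<le> e * content K"
      using elem(6)[OF xK(1)] by simp
  qed
  also have "\<dots> \<le> (\<Sum>(x, K)\<in>p. e * content K)"
    using \<open>finite p\<close> \<open>0 \<le> e\<close> by (intro sum_mono2) (auto simp: split_def)
  also have "\<dots> = e * (b - a)"
    using additive_content_tagged_division[of p a b] p \<open>a \<le> b\<close>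
    by (simp add: split_def sum_distrib_left[symmetric])
  finally show ?thesis .
qed

lemma abs_cont_on_negligible_tags:
  assumes "abs_cont_on a b F" and "negligible N" and "e > 0"
  obtains \<gamma> where "gauge \<gamma>"
    "\<And>p. p tagged_division_of {a..b} \<Longrightarrow> \<gamma> fine p
       \<Longrightarrow> (\<Sum>(x, K)\<in>{(x, K) \<in> p. x \<in> N}. \<bar>F (Sup K) - F (Inf K)\<bar>) < e"
proof -
  obtain d where "d > 0" and d: "\<And>p q. p tagged_division_of {a..b} \<Longrightarrow> q \<subseteq> p
      \<Longrightarrow> (\<Sum>(x, K)\<in>q. content K) < d \<Longrightarrow> (\<Sum>(x, K)\<in>q. \<bar>F (Sup K) - F (Inf K)\<bar>) < e"
    using abs_cont_on_tagged_subdivision[OF assms(1,3)] by blast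
  obtain \<gamma> where "gauge \<gamma>" and \<gamma>: "\<And>p. p tagged_division_of {a..b} \<Longrightarrow> \<gamma> fine p
      \<Longrightarrow> (\<Sum>(x, K)\<in>p. content K * indicator N x) < d"
    using negligible_tagged_content_small[OF \<open>negligible N\<close> \<open>d > 0\<close>] by blast
  have "(\<Sum>(x, K)\<in>{(x, K) \<in> p. x \<in> N}. \<bar>F (Sup K) - F (Inf K)\<bar>) < e"
    if p: "p tagged_division_of {a..b}" and "\<gamma> fine p" for p
  proof (rule d[OF p])
    have "finite p" using p by blast
    have "(\<Sum>(x, K)\<in>{(x, K) \<in> p. x \<in> N}. content K) = (\<Sum>(x, K)\<in>{(x, K) \<in> p. x \<in> N}. content K * indicator N x)"
      by (intro sum.cong) auto
    also have "\<dots> \<le> (\<Sum>(x, K)\<in>p. content K * indicator N x)"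
      using \<open>finite p\<close> by (intro sum_mono2) auto
    also have "\<dots> < d" using \<gamma>[OF p \<open>\<gamma> fine p\<close>] .
    finally show "(\<Sum>(x, K)\<in>{(x, K) \<in> p. x \<in> N}. content K) < d" .
  qed auto
  then show ?thesis using that \<open>gauge \<gamma>\<close> by blast
qed

theorem has_integral_abs_cont_on_derivative:
  fixes F f :: "real \<Rightarrow> real"
  assumes "a \<le> b" and ac: "abs_cont_on a b F" and "negligible N"
    and der: "\<And>x. x \<in> {a..b} - N \<Longrightarrow> (F has_real_derivative f x) (at x within {a..b})"
  shows "(f has_integral (F b - F a)) {a..b}"
proof -
  define g where "g x = (if x \<in> N then 0 else f x)" for x
  have "(g has_integral (F b - F a)) {a..b}"
    unfolding has_integral_real
  proof (intro allI impI)
    fix e :: real assume "e > 0"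
    obtain \<gamma> where "gauge \<gamma>" and \<gamma>: "\<And>p. p tagged_division_of {a..b} \<Longrightarrow> \<gamma> fine p
        \<Longrightarrow> (\<Sum>(x, K)\<in>{(x, K) \<in> p. x \<in> N}. \<bar>F (Sup K) - F (Inf K)\<bar>) < e/2"
      using abs_cont_on_negligible_tags[OF ac \<open>negligible N\<close> half_gt_zero[OF \<open>e > 0\<close>]] by blast
    define e' where "e' = e / (2 * (b - a) + 2)"
    have "e' > 0" using \<open>e > 0\<close> \<open>a \<le> b\<close> by (simp add: e'_def)
    obtain \<delta> where "\<And>x. \<delta> x > 0" and \<delta>: "\<And>x y. x \<in> {a..b} - N \<Longrightarrow> y \<in> {a..b} \<Longrightarrow> \<bar>y - x\<bar> < \<delta> x
        \<Longrightarrow> \<bar>F y - F x - (y - x) * f x\<bar> \<le> e' * \<bar>y - x\<bar>"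
      using has_real_derivative_uniform_gauge[OF der \<open>e' > 0\<close>] by blast
    have "norm ((\<Sum>(x, K)\<in>p. content K *\<^sub>R g x) - (F b - F a)) < e"
      if p: "p tagged_division_of {a..b}" and fine: "(\<lambda>x. ball x (\<delta> x) \<inter> \<gamma> x) fine p" for p
    proof -
      have "finite p" using p by blast
      define T where "T = (\<lambda>(x, K). content K * g x - (F (Sup K) - F (Inf K)))"
      define pN where "pN = {(x, K) \<in> p. x \<in> N}"
      have "pN \<subseteq> p" by (auto simp: pN_def)
      have "(\<Sum>(x, K)\<in>p. content K *\<^sub>R g x) - (F b - F a) = sum T p"
        using additive_tagged_division_1[OF \<open>a \<le> b\<close> p, of F]
        by (simp add: T_def split_def sum_subtractf)
      also have "\<dots> = sum T (p - pN) + sum T pN"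
        using sum.subset_diff[OF \<open>pN \<subseteq> p\<close> \<open>finite p\<close>] .
      finally have split: "(\<Sum>(x, K)\<in>p. content K *\<^sub>R g x) - (F b - F a) = sum T (p - pN) + sum T pN" .
      have "sum T (p - pN) = (\<Sum>(x, K)\<in>{(x, K) \<in> p. x \<notin> N}. content K * f x - (F (Sup K) - F (Inf K)))"
        by (rule sum.cong) (auto simp: pN_def T_def g_def)
      also have "\<bar>\<dots>\<bar> \<le> e' * (b - a)"
        using fine \<delta> \<open>e' > 0\<close> by (intro tagged_division_derivative_error[OF p \<open>a \<le> b\<close>]) (auto simp: fine_Int)
      also have "\<dots> < e/2"
        using \<open>e > 0\<close> \<open>a \<le> b\<close> by (simp add: e'_def field_simps)
      finally have "\<bar>sum T (p - pN)\<bar> < e/2" .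
      moreover have "\<bar>sum T pN\<bar> \<le> (\<Sum>(x, K)\<in>pN. \<bar>F (Sup K) - F (Inf K)\<bar>)"
        by (rule order_trans[OF sum_abs]) (auto simp: T_def g_def pN_def intro!: sum_mono)
      moreover have "(\<Sum>(x, K)\<in>pN. \<bar>F (Sup K) - F (Inf K)\<bar>) < e/2"
        using \<gamma>[OF p] fine by (simp add: pN_def fine_Int)
      ultimately show ?thesis using split by simp
    qed
    moreover have "gauge (\<lambda>x. ball x (\<delta> x) \<inter> \<gamma> x)"
      using \<open>gauge \<gamma>\<close> \<open>\<And>x. \<delta> x > 0\<close> by (intro gauge_Int gauge_ball_dependent) auto
    ultimately show "\<exists>\<gamma>. gauge \<gamma> \<and> (\<forall>p. p tagged_division_of {a..b} \<and> \<gamma> fine p \<longrightarrow>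
        norm ((\<Sum>(x, K)\<in>p. content K *\<^sub>R g x) - (F b - F a)) < e)"
      by blast
  qed
  then show ?thesis
    by (rule has_integral_spike[OF \<open>negligible N\<close>, rotated]) (simp add: g_def)
qed

lemma AE_lebesgue_on_negligible_exception:
  assumes "AE x in lebesgue_on S. P x" and "S \<in> sets lebesgue"
  obtains N where "negligible N" "\<And>x. x \<in> S - N \<Longrightarrow> P x"
proof -
  obtain N where N: "{x \<in> space (lebesgue_on S). \<not> P x} \<subseteq> N" "N \<in> null_sets (lebesgue_on S)"
    using assms(1) by (auto elim!: AE_E simp: null_sets_def)
  then have "negligible N"
    using assms(2) by (simp add: null_sets_restrict_space negligible_iff_null_sets)
  moreover have "P x" if "x \<in> S - N" for x
    using N(1) that by auto
  ultimately show ?thesis using that by blast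
qed

corollary has_integral_abs_cont_on_AE_derivative:
  fixes F f :: "real \<Rightarrow> real"
  assumes "a \<le> b" and "abs_cont_on a b F"
    and "AE x in lebesgue_on {a..b}. (F has_real_derivative f x) (at x within {a..b})"
  shows "(f has_integral (F b - F a)) {a..b}"
proof -
  obtain N where "negligible N"
    "\<And>x. x \<in> {a..b} - N \<Longrightarrow> (F has_real_derivative f x) (at x within {a..b})"
    using AE_lebesgue_on_negligible_exception[OF assms(3)] by auto
  then show ?thesis using has_integral_abs_cont_on_derivative[OF assms(1,2)] by blast
qed

section \<open>Chebyshev polynomials of the second kind\<close>

text \<open>U_n is defined by its Taylor expansion at 1, which makes all its derivatives at \<plusminus>1
  explicit; \<open>taylor1_deriv c n j\<close> is the j-th derivative of \<Sum>_{k\<le>n} c_k (y - 1)^k.\<close>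

definition cheb2_coeff :: "nat \<Rightarrow> nat \<Rightarrow> real" where
  "cheb2_coeff n k = real ((n + k + 1) choose (2 * k + 1)) * 2 ^ k"

definition taylor1_deriv :: "(nat \<Rightarrow> real) \<Rightarrow> nat \<Rightarrow> nat \<Rightarrow> real \<Rightarrow> real" where
  "taylor1_deriv c n j y = (\<Sum>k\<in>{j..n}. c k * (fact k / fact (k - j)) * (y - 1) ^ (k - j))"

definition cheb2 :: "nat \<Rightarrow> real \<Rightarrow> real" where
  "cheb2 n y = taylor1_deriv (cheb2_coeff n) n 0 y"

lemma taylor1_deriv_has_derivative:
  "(taylor1_deriv c n j has_real_derivative taylor1_deriv c n (Suc j) y) (at y)"
proof -
  have "(taylor1_deriv c n j has_real_derivative
     (\<Sum>k\<in>{j..n}. c k * (fact k / fact (k - j)) * (real (k - j) * (y - 1) ^ (k - j - 1)))) (at y)"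
    unfolding taylor1_deriv_def[abs_def] by (rule DERIV_sum) (auto intro!: derivative_eq_intros)
  also have "(\<Sum>k\<in>{j..n}. c k * (fact k / fact (k - j)) * (real (k - j) * (y - 1) ^ (k - j - 1)))
      = (\<Sum>k\<in>{Suc j..n}. c k * (fact k / fact (k - j)) * (real (k - j) * (y - 1) ^ (k - j - 1)))"
    by (rule sum.mono_neutral_right) auto
  also have "\<dots> = taylor1_deriv c n (Suc j) y"
    unfolding taylor1_deriv_def
  proof (rule sum.cong)
    fix k assume "k \<in> {Suc j..n}"
    then have k: "k - j = Suc (k - Suc j)" by auto
    have "(fact k / fact (k - j) :: real) * real (k - j) = fact k / fact (k - Suc j)"
      unfolding k fact_Suc by (simp del: of_nat_Suc)
    then show "c k * (fact k / fact (k - j)) * (real (k - j) * (y - 1) ^ (k - j - 1)) =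
          c k * (fact k / fact (k - Suc j)) * (y - 1) ^ (k - Suc j)"
      by (simp add: k)
  qed simp
  finally show ?thesis .
qed
lemma taylor1_deriv_at_1:
  assumes "j \<le> n"
  shows "taylor1_deriv c n j 1 = c j * fact j"
proof -
  have "taylor1_deriv c n j 1 = (\<Sum>k\<in>{j}. c k * (fact k / fact (k - j)) * (1 - 1) ^ (k - j))"
    unfolding taylor1_deriv_def by (rule sum.mono_neutral_right) (use assms in auto)
  then show ?thesis by simp
qed

lemma taylor1_deriv_top: "taylor1_deriv c n n y = c n * fact n"
  unfolding taylor1_deriv_def by simp

lemma cheb2_coeff_eq_0: "n < k \<Longrightarrow> cheb2_coeff n k = 0"
  unfolding cheb2_coeff_def by (simp add: binomial_eq_0 del: binomial_Suc_Suc)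

lemma cheb2_eq_sum:
  assumes "n \<le> M"
  shows "cheb2 n y = (\<Sum>k\<le>M. cheb2_coeff n k * (y - 1) ^ k)"
proof -
  have "cheb2 n y = (\<Sum>k\<in>{0..n}. cheb2_coeff n k * (y - 1) ^ k)"
    unfolding cheb2_def taylor1_deriv_def by simp
  also have "\<dots> = (\<Sum>k\<le>M. cheb2_coeff n k * (y - 1) ^ k)"
    by (rule sum.mono_neutral_left) (use assms in \<open>auto simp: cheb2_coeff_eq_0\<close>)
  finally show ?thesis .
qed

lemma cheb2_0: "cheb2 0 y = 1"
  by (simp add: cheb2_def taylor1_deriv_def cheb2_coeff_def)

lemma cheb2_1: "cheb2 (Suc 0) y = 2 * y"
  by (simp add: cheb2_def taylor1_deriv_def cheb2_coeff_def algebra_simps)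

lemma choose_second_difference:
  "(Suc (Suc m) choose Suc (Suc r)) + (m choose Suc (Suc r)) = 2 * (Suc m choose Suc (Suc r)) + (m choose r)"
  by (simp add: binomial_Suc_Suc)

lemma cheb2_coeff_rec:
  "cheb2_coeff (Suc (Suc n)) k
     = 2 * cheb2_coeff (Suc n) k + 2 * (if k = 0 then 0 else cheb2_coeff (Suc n) (k - 1)) - cheb2_coeff n k"
proof (cases k)
  case (Suc j)
  have "real (Suc (Suc (n + j + 2)) choose Suc (Suc (2 * j + 1))) + real ((n + j + 2) choose Suc (Suc (2 * j + 1)))
      = 2 * real (Suc (n + j + 2) choose Suc (Suc (2 * j + 1))) + real ((n + j + 2) choose (2 * j + 1))"
    using arg_cong[OF choose_second_difference, of real] by simp
  from arg_cong[OF this, of "\<lambda>x. 2 * 2 ^ j * x"] show ?thesis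
    unfolding Suc cheb2_coeff_def by (simp add: algebra_simps del: binomial_Suc_Suc)
qed (simp add: cheb2_coeff_def)

lemma cheb2_rec: "cheb2 (Suc (Suc n)) y = 2 * y * cheb2 (Suc n) y - cheb2 n y"
proof -
  define z where "z = y - 1"
  define M where "M = Suc (Suc n)"
  have sum_eq: "cheb2 m y = (\<Sum>k\<le>M. cheb2_coeff m k * z ^ k)" if "m \<le> M" for m
    using cheb2_eq_sum[OF that] by (simp add: z_def)
  have shift: "z * cheb2 (Suc n) y = (\<Sum>k\<le>M. (if k = 0 then 0 else cheb2_coeff (Suc n) (k - 1)) * z ^ k)"
  proof -
    have "z * cheb2 (Suc n) y = (\<Sum>k\<le>M. cheb2_coeff (Suc n) k * z ^ Suc k)"
      by (simp add: sum_eq M_def sum_distrib_left algebra_simps)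
    also have "\<dots> = (\<Sum>k\<le>Suc M. (if k = 0 then 0 else cheb2_coeff (Suc n) (k - 1)) * z ^ k)"
      by (subst sum.atMost_Suc_shift) simp
    also have "\<dots> = (\<Sum>k\<le>M. (if k = 0 then 0 else cheb2_coeff (Suc n) (k - 1)) * z ^ k)"
      using cheb2_coeff_eq_0[of "Suc n" M] by (simp add: M_def)
    finally show ?thesis .
  qed
  have "2 * y * cheb2 (Suc n) y - cheb2 n y = 2 * cheb2 (Suc n) y + 2 * (z * cheb2 (Suc n) y) - cheb2 n y"
    by (simp add: z_def algebra_simps)
  also have "\<dots> = (\<Sum>k\<le>M. (2 * cheb2_coeff (Suc n) k
      + 2 * (if k = 0 then 0 else cheb2_coeff (Suc n) (k - 1)) - cheb2_coeff n k) * z ^ k)"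
    unfolding shift using sum_eq[of "Suc n"] sum_eq[of n]
    by (simp add: M_def sum_distrib_left sum.distrib sum_subtractf algebra_simps)
  also have "\<dots> = (\<Sum>k\<le>M. cheb2_coeff (Suc (Suc n)) k * z ^ k)"
    by (simp only: cheb2_coeff_rec)
  also have "\<dots> = cheb2 (Suc (Suc n)) y"
    by (simp add: sum_eq M_def)
  finally show ?thesis by simp
qed

lemma cheb2_minus: "cheb2 n (-y) = (-1) ^ n * cheb2 n y"
proof (induction n rule: induct_nat_012)
  case (ge2 n)
  then show ?case by (simp add: cheb2_rec algebra_simps)
qed (simp_all add: cheb2_0 cheb2_1)

lemma cheb2_cos: "cheb2 n (cos t) * sin t = sin (real (Suc n) * t)"
proof (induction n rule: induct_nat_012)
  case (ge2 n)
  have "cheb2 (Suc (Suc n)) (cos t) * sin t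
      = 2 * cos t * sin (real (Suc (Suc n)) * t) - sin (real (Suc n) * t)"
    using ge2 by (simp add: cheb2_rec algebra_simps)
  also have "\<dots> = sin (real (Suc (Suc (Suc n))) * t)"
    using sin_add[of "real (Suc (Suc n)) * t" t] sin_diff[of "real (Suc (Suc n)) * t" t]
    by (simp add: algebra_simps)
  finally show ?case .
qed (simp_all add: cheb2_0 cheb2_1 sin_double)

lemma taylor1_deriv_cheb2_minus:
  "taylor1_deriv (cheb2_coeff n) n j (-y) = (-1) ^ (n + j) * taylor1_deriv (cheb2_coeff n) n j y"
proof (induction j arbitrary: y)
  case 0
  then show ?case using cheb2_minus[of n y] by (simp add: cheb2_def)
next
  case (Suc j)
  let ?T = "taylor1_deriv (cheb2_coeff n) n"
  have "((\<lambda>y. ?T j (-y)) has_real_derivative - ?T (Suc j) (-y)) (at y)"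
    using taylor1_deriv_has_derivative DERIV_mirror by blast
  moreover have "((\<lambda>y. ?T j (-y)) has_real_derivative (-1) ^ (n + j) * ?T (Suc j) y) (at y)"
    unfolding Suc.IH by (intro DERIV_cmult taylor1_deriv_has_derivative)
  ultimately show ?case
    using DERIV_unique by fastforce
qed
lemma abs_sin_on_half_period:
  fixes m :: real and k :: nat
  assumes m: "m > 0" and t: "t \<in> {real k * pi / m .. real (Suc k) * pi / m}"
  shows "\<bar>sin (m * t)\<bar> = (-1) ^ k * sin (m * t)"
proof -
  define s where "s = m * t - real k * pi"
  have s0: "0 \<le> s" and s1: "s \<le> pi"
  proof -
    have "real k * pi \<le> m * t" using t m by (auto simp: field_simps)
    then show "0 \<le> s" unfolding s_def by simp
    have "m * t \<le> real (Suc k) * pi" using t m by (auto simp: field_simps)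
    then show "s \<le> pi" unfolding s_def by (simp add: algebra_simps)
  qed
  have "sin (m * t) = sin (s + real k * pi)" unfolding s_def by simp
  also have "\<dots> = (-1) ^ k * sin s" by (simp add: sin_add)
  finally have E: "sin (m * t) = (-1) ^ k * sin s" .
  have "sin s \<ge> 0" using sin_ge_zero[OF s0 s1] .
  then show ?thesis unfolding E by (simp add: abs_mult)
qed

lemma has_integral_abs_sin_periods:
  fixes m :: real
  assumes m: "m > 0"
  shows "((\<lambda>t. \<bar>sin (m * t)\<bar>) has_integral (2 * real k / m)) {0 .. real k * pi / m}"
proof (induction k)
  case 0
  then show ?case by (simp add: has_integral_refl)
next
  case (Suc k)
  define G where "G t = - ((-1) ^ k * cos (m * t) / m)" for t
  have der: "(G has_real_derivative (-1) ^ k * sin (m * t)) (at t within X)" for t X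
    unfolding G_def using m by (auto intro!: derivative_eq_intros)
  have lek: "real k * pi / m \<le> real (Suc k) * pi / m"
    using m by (intro divide_right_mono mult_right_mono) auto
  have "((\<lambda>t. (-1) ^ k * sin (m * t)) has_integral (G (real (Suc k) * pi / m) - G (real k * pi / m)))
      {real k * pi / m .. real (Suc k) * pi / m}"
    using fundamental_theorem_of_calculus[OF lek, of G "\<lambda>t. (-1) ^ k * sin (m * t)"] der
    by (simp add: has_real_derivative_iff_has_vector_derivative[symmetric])
  moreover have "G (real (Suc k) * pi / m) - G (real k * pi / m) = 2 / m"
  proof -
    have "m * (real (Suc k) * pi / m) = real (Suc k) * pi" using m by (simp del: of_nat_Suc)
    then have c1: "cos (m * (real (Suc k) * pi / m)) = (-1) ^ Suc k" using cos_npi[of "Suc k"] by (simp only:)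
    have c2: "cos (m * (real k * pi / m)) = (-1) ^ k" using m by simp
    show ?thesis unfolding G_def c1 c2 by (simp add: field_simps)
  qed
  ultimately have calc: "((\<lambda>t. (-1) ^ k * sin (m * t)) has_integral (2 / m)) {real k * pi / m .. real (Suc k) * pi / m}"
    by simp
  have piece: "((\<lambda>t. \<bar>sin (m * t)\<bar>) has_integral (2 / m)) {real k * pi / m .. real (Suc k) * pi / m}"
  proof (rule has_integral_eq[OF _ calc])
    fix t assume "t \<in> {real k * pi / m .. real (Suc k) * pi / m}"
    then show "(-1) ^ k * sin (m * t) = \<bar>sin (m * t)\<bar>" using abs_sin_on_half_period[OF m] by simp
  qed
  have z: "0 \<le> real k * pi / m" using m by simp
  have "((\<lambda>t. \<bar>sin (m * t)\<bar>) has_integral (2 * real k / m + 2 / m)) {0 .. real (Suc k) * pi / m}"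
    by (rule has_integral_combine[OF z lek Suc.IH piece])
  moreover have "2 * real k / m + 2 / m = 2 * real (Suc k) / m" by (simp add: add_divide_distrib[symmetric] algebra_simps)
  ultimately show ?case by simp
qed

lemma has_integral_abs_sin:
  "((\<lambda>t. \<bar>sin (real (Suc n) * t)\<bar>) has_integral 2) {0 .. pi}"
proof -
  have h: "((\<lambda>t. \<bar>sin (real (Suc n) * t)\<bar>) has_integral (2 * real (Suc n) / real (Suc n))) {0 .. real (Suc n) * pi / real (Suc n)}"
    by (rule has_integral_abs_sin_periods) simp
  have e1: "2 * real (Suc n) / real (Suc n) = 2" "real (Suc n) * pi / real (Suc n) = pi"
    by (simp_all del: of_nat_Suc)
  show ?thesis using h unfolding e1 .
qed

lemma continuous_on_taylor1_deriv: "continuous_on S (taylor1_deriv c n j)"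
  unfolding taylor1_deriv_def by (intro continuous_intros)

lemma continuous_on_cheb2: "continuous_on S (cheb2 n)"
  unfolding cheb2_def by (rule continuous_on_taylor1_deriv)

lemma has_integral_abs_cheb2: "((\<lambda>y. \<bar>cheb2 n y\<bar>) has_integral 2) {-1..1}"
proof -
  let ?f = "\<lambda>y. \<bar>cheb2 n y\<bar>"
  have cont: "continuous_on {-1..1} ?f"
    using continuous_on_cheb2 by (intro continuous_intros)
  have "((\<lambda>x. (- sin x) *\<^sub>R ?f (cos x)) has_integral
      (integral {cos 0..cos pi} ?f - integral {cos pi..cos 0} ?f)) {0..pi}"
  proof (rule has_integral_substitution_general[where s="{}" and c="-1" and d=1])
    show "continuous_on {0..pi} cos" by (intro continuous_intros)
  qed (auto intro: cont DERIV_subset[OF DERIV_cos])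
  from has_integral_neg[OF this]
  have I: "((\<lambda>x. sin x * ?f (cos x)) has_integral integral {-1..1} ?f) {0..pi}"
    by simp
  have eq: "sin x * ?f (cos x) = \<bar>sin (real (Suc n) * x)\<bar>" if "x \<in> {0..pi}" for x
  proof -
    have "sin x \<ge> 0" using that by (auto intro: sin_ge_zero)
    then have "sin x * ?f (cos x) = \<bar>cheb2 n (cos x) * sin x\<bar>" by (simp add: abs_mult)
    then show ?thesis using cheb2_cos[of n x] by simp
  qed
  have "((\<lambda>x. \<bar>sin (real (Suc n) * x)\<bar>) has_integral integral {-1..1} ?f) {0..pi}"
    by (rule has_integral_eq[OF eq I])
  then have "integral {-1..1} ?f = 2"
    using has_integral_abs_sin has_integral_unique by blast
  then show ?thesis
    using integrable_integral[OF integrable_continuous_real[OF cont]] by simp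
qed

lemma finite_cheb2_zeros: "finite {y \<in> {-1..1}. cheb2 n y = 0}"
proof -
  have "{y \<in> {-1..1}. cheb2 n y = 0} \<subseteq> (\<lambda>i. cos (real i * pi / real (Suc n))) ` {0..Suc n}"
  proof safe
    fix y :: real assume y: "y \<in> {-1..1}" "cheb2 n y = 0"
    define \<theta> where "\<theta> = arccos y"
    have \<theta>: "0 \<le> \<theta>" "\<theta> \<le> pi" "cos \<theta> = y" using y arccos_bounded[of y] by (auto simp: \<theta>_def)
    then have "sin (real (Suc n) * \<theta>) = 0" using cheb2_cos[of n \<theta>] y by simp
    then obtain i :: int where i: "real (Suc n) * \<theta> = of_int i * pi" using sin_zero_iff_int2 by blast
    have "0 \<le> real_of_int i * pi" "real_of_int i * pi \<le> real (Suc n) * pi"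
      using \<theta> i[symmetric] by (auto intro: mult_left_mono)
    then have "0 \<le> i" "i \<le> int (Suc n)"
      using pi_gt_zero by (simp_all add: zero_le_mult_iff)
    moreover have "\<theta> = real (nat i) * pi / real (Suc n)"
      using i \<open>0 \<le> i\<close> by (simp add: field_simps)
    then have "y = cos (real (nat i) * pi / real (Suc n))"
      using \<theta> by simp
    ultimately show "y \<in> (\<lambda>i. cos (real i * pi / real (Suc n))) ` {0..Suc n}"
      by (intro image_eqI[of _ _ "nat i"]) auto
  qed
  then show ?thesis using finite_subset by blast
qed

section \<open>The Peano kernel\<close>

definition unit_coord :: "real \<Rightarrow> real \<Rightarrow> real \<Rightarrow> real" where
  "unit_coord a b t = (2 * t - a - b) / (b - a)"

lemma unit_coord_has_derivative:
  "(unit_coord a b has_real_derivative 2 / (b - a)) (at t within S)"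
proof -
  have "((\<lambda>t. 2 * t - a - b) has_real_derivative 2) (at t within S)"
    by (auto intro!: derivative_eq_intros)
  from DERIV_cdivide[OF this, of "b - a"] show ?thesis
    by (simp add: unit_coord_def[abs_def])
qed

lemma unit_coord_endpoints:
  assumes "a < b"
  shows "unit_coord a b a = -1" "unit_coord a b b = 1"
  using assms by (simp_all add: unit_coord_def field_simps)

lemma unit_coord_mem_iff:
  assumes "a < b"
  shows "unit_coord a b t \<in> {-1..1} \<longleftrightarrow> t \<in> {a..b}"
  using assms by (simp add: unit_coord_def divide_le_eq le_divide_eq)

lemma unit_coord_inverse:
  assumes "a < b"
  shows "t = (a + b) / 2 + (b - a) / 2 * unit_coord a b t"
  using assms by (simp add: unit_coord_def field_simps)

text \<open>\<open>peano_kernel n a b j\<close> is the j-th derivative of P_0(t) = ((b - a)/4)^n U_n(unit_coord a b t),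
  which is (-1)^n n! times the Peano kernel of E_n.\<close>
definition peano_kernel :: "nat \<Rightarrow> real \<Rightarrow> real \<Rightarrow> nat \<Rightarrow> real \<Rightarrow> real" where
  "peano_kernel n a b j t =
     ((b - a) ^ n / 4 ^ n) * (2 / (b - a)) ^ j * taylor1_deriv (cheb2_coeff n) n j (unit_coord a b t)"

lemma peano_kernel_has_derivative:
  "(peano_kernel n a b j has_real_derivative peano_kernel n a b (Suc j) t) (at t within S)"
proof -
  have "((\<lambda>t. taylor1_deriv (cheb2_coeff n) n j (unit_coord a b t)) has_real_derivative
      taylor1_deriv (cheb2_coeff n) n (Suc j) (unit_coord a b t) * (2 / (b - a))) (at t within S)"
    by (rule DERIV_chain2[OF taylor1_deriv_has_derivative unit_coord_has_derivative])
  from DERIV_cmult[OF this, of "(b - a) ^ n / 4 ^ n * (2 / (b - a)) ^ j"] show ?thesis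
    unfolding peano_kernel_def by (simp add: algebra_simps)
qed

lemma continuous_on_peano_kernel: "continuous_on S (peano_kernel n a b j)"
  using peano_kernel_has_derivative
  by (meson DERIV_continuous continuous_at_imp_continuous_on)

lemma peano_kernel_top:
  assumes "a < b"
  shows "peano_kernel n a b n t = fact n"
proof -
  have "cheb2_coeff n n = 2 ^ n"
    unfolding cheb2_coeff_def by (simp add: mult_2 del: binomial_Suc_Suc)
  moreover have "(4::real) ^ n = 2 ^ n * 2 ^ n"
    by (simp flip: power_mult_distrib)
  ultimately show ?thesis
    using assms by (simp add: peano_kernel_def taylor1_deriv_top power_divide field_simps)
qed

lemma peano_kernel_left_endpoint:
  assumes "a < b"
  shows "peano_kernel n a b j a = (-1) ^ (n + j) * peano_kernel n a b j b"
  using taylor1_deriv_cheb2_minus[of n j 1]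
  by (simp add: peano_kernel_def unit_coord_endpoints[OF assms] algebra_simps)

definition endpoint_weight :: "nat \<Rightarrow> real \<Rightarrow> real \<Rightarrow> nat \<Rightarrow> real" where
  "endpoint_weight n a b k = (b - a) ^ (k + 1) * fact (2 * n - k) * fact (n - k - 1)
     / (2 ^ (2 * k + 2) * fact (2 * n - 2 * k - 1) * fact (k + 1))"

lemma peano_kernel_right_endpoint:
  assumes "a < b" and "k < n"
  shows "peano_kernel n a b (n - 1 - k) b = endpoint_weight n a b k"
proof -
  obtain j where n: "n = j + k + 1" using assms(2) by (metis add.commute add_Suc less_imp_Suc_add plus_1_eq_Suc)
  have j: "n - 1 - k = j" "2 * n - k = 2 * j + k + 2" "n - k - 1 = j" "2 * n - 2 * k - 1 = 2 * j + 1"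
    using n by auto
  have choose: "real ((n + j + 1) choose (2 * j + 1)) = fact (2 * j + k + 2) / (fact (2 * j + 1) * fact (k + 1))"
  proof -
    have "n + j + 1 = 2 * j + k + 2" "2 * j + k + 2 - (2 * j + 1) = k + 1" using n by auto
    moreover have "real ((2 * j + k + 2) choose (2 * j + 1))
        = fact (2 * j + k + 2) / (fact (2 * j + 1) * fact (2 * j + k + 2 - (2 * j + 1)))"
      by (rule binomial_fact) simp
    ultimately show ?thesis by (simp only:)
  qed
  define h where "h = b - a"
  have "h > 0" using assms(1) by (simp add: h_def)
  have "peano_kernel n a b (n - 1 - k) b = h ^ n / 4 ^ n * (2 / h) ^ j * (cheb2_coeff n j * fact j)"
    unfolding peano_kernel_def j(1) unit_coord_endpoints[OF assms(1)] h_def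
    using n by (simp add: taylor1_deriv_at_1)
  also have "\<dots> = h ^ n / 4 ^ n * (2 ^ j / h ^ j) * (real ((n + j + 1) choose (2 * j + 1)) * 2 ^ j * fact j)"
    unfolding cheb2_coeff_def by (simp add: power_divide)
  also have "\<dots> = h ^ (k + 1) * fact (2 * j + k + 2) * fact j / (2 ^ (2 * k + 2) * fact (2 * j + 1) * fact (k + 1))"
  proof -
    have powers: "h ^ n = h ^ j * h ^ (k + 1)" "(4::real) ^ n = 2 ^ j * 2 ^ j * 2 ^ (2 * k + 2)"
      by (simp_all add: n power_add power_mult flip: power_mult_distrib)
    have cancel: "A * H / (B * B * C) * (B / A) * (X / (Y * Z) * B * W) = H * X * W / (C * Y * Z)"
      if "A \<noteq> 0" "B \<noteq> 0" for A B C H X Y Z W :: real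
      using that by (simp add: field_simps)
    show ?thesis
      unfolding choose powers by (rule cancel) (use \<open>h > 0\<close> in auto)
  qed
  finally show ?thesis unfolding endpoint_weight_def j(2,3,4) h_def .
qed

lemma peano_kernel_0: "peano_kernel n a b 0 t = (b - a) ^ n / 4 ^ n * cheb2 n (unit_coord a b t)"
  by (simp add: peano_kernel_def cheb2_def)

lemma has_integral_abs_peano_kernel:
  assumes "a < b"
  shows "((\<lambda>t. \<bar>peano_kernel n a b 0 t\<bar>) has_integral ((b - a) ^ (n + 1) / 4 ^ n)) {a..b}"
proof -
  let ?u = "unit_coord a b"
  have "((\<lambda>t. (2 / (b - a)) *\<^sub>R \<bar>cheb2 n (?u t)\<bar>) has_integral
      (integral {?u a..?u b} (\<lambda>y. \<bar>cheb2 n y\<bar>) - integral {?u b..?u a} (\<lambda>y. \<bar>cheb2 n y\<bar>))) {a..b}"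
  proof (rule has_integral_substitution_general[where s="{}" and c="-1" and d=1])
    show "continuous_on {-1..1} (\<lambda>y. \<bar>cheb2 n y\<bar>)"
      using continuous_on_cheb2 by (intro continuous_intros)
    show "?u ` {a..b} \<subseteq> {-1..1}" using unit_coord_mem_iff[OF assms] by blast
    show "continuous_on {a..b} ?u"
      using unit_coord_has_derivative by (meson DERIV_continuous continuous_at_imp_continuous_on)
  qed (use assms unit_coord_has_derivative in auto)
  then have "((\<lambda>t. (2 / (b - a)) * \<bar>cheb2 n (?u t)\<bar>) has_integral 2) {a..b}"
    using integral_unique[OF has_integral_abs_cheb2[of n]] by (simp add: unit_coord_endpoints[OF assms])
  from has_integral_mult_right[OF this, of "(b - a) ^ n / 4 ^ n * ((b - a) / 2)"]
  have "((\<lambda>t. (b - a) ^ n / 4 ^ n * ((b - a) / 2) * (2 / (b - a) * \<bar>cheb2 n (?u t)\<bar>)) has_integral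
      (b - a) ^ n / 4 ^ n * ((b - a) / 2) * 2) {a..b}" .
  moreover have "(b - a) ^ n / 4 ^ n * ((b - a) / 2) * 2 = (b - a) ^ (n + 1) / 4 ^ n"
    by simp
  moreover have "(b - a) ^ n / 4 ^ n * ((b - a) / 2) * (2 / (b - a) * \<bar>cheb2 n (?u t)\<bar>)
      = \<bar>peano_kernel n a b 0 t\<bar>" for t
    using assms by (simp add: peano_kernel_0 abs_mult)
  ultimately show ?thesis by (simp add: mult.commute)
qed

lemma finite_peano_kernel_zeros:
  assumes "a < b"
  shows "finite {t \<in> {a..b}. peano_kernel n a b 0 t = 0}"
proof -
  have "{t \<in> {a..b}. peano_kernel n a b 0 t = 0}
      \<subseteq> (\<lambda>y. (a + b) / 2 + (b - a) / 2 * y) ` {y \<in> {-1..1}. cheb2 n y = 0}"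
    using assms unit_coord_mem_iff[OF assms] unit_coord_inverse[OF assms]
    by (auto simp: peano_kernel_0 intro!: image_eqI)
  then show ?thesis using finite_subset finite_cheb2_zeros by blast
qed

section \<open>The error bound and its sharpness\<close>

lemma E_n_eq:
  "E_n n a b f D = integral {a..b} f
     - (\<Sum>k<n. endpoint_weight n a b k * (D k a + (-1) ^ k * D k b)) / fact n"
  by (simp add: E_n_def endpoint_weight_def)

lemma alternating_product_telescope:
  fixes Q R :: "nat \<Rightarrow> real"
  shows "(\<Sum>j<n. (-1) ^ j * (Q (Suc j) * R (n - 1 - j) + Q j * R (n - j)))
    = Q 0 * R n - (-1) ^ n * Q n * R 0"
proof (induction n arbitrary: Q)
  case (Suc n)
  have "(\<Sum>j<Suc n. (-1) ^ j * (Q (Suc j) * R (Suc n - 1 - j) + Q j * R (Suc n - j)))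
      = Q 1 * R n + Q 0 * R (Suc n)
        - (\<Sum>j<n. (-1) ^ j * (Q (Suc (Suc j)) * R (n - 1 - j) + Q (Suc j) * R (n - j)))"
    by (subst sum.lessThan_Suc_shift) (simp add: sum_negf[symmetric])
  then show ?case using Suc.IH[of "\<lambda>i. Q (Suc i)"] by simp
qed simp

lemma peano_kernel_boundary_sum:
  assumes "a < b"
  shows "(\<Sum>j<n. (-1) ^ j * (peano_kernel n a b j b * X (n - 1 - j) b - peano_kernel n a b j a * X (n - 1 - j) a))
    = (-1) ^ (n - 1) * (\<Sum>k<n. endpoint_weight n a b k * (X k a + (-1) ^ k * X k b))"
proof -
  have "(\<Sum>j<n. (-1) ^ j * (peano_kernel n a b j b * X (n - 1 - j) b - peano_kernel n a b j a * X (n - 1 - j) a))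
      = (\<Sum>k<n. (-1) ^ (n - 1 - k) * (peano_kernel n a b (n - 1 - k) b * X k b
           - peano_kernel n a b (n - 1 - k) a * X k a))"
    by (subst sum.nat_diff_reindex[symmetric]) (auto intro!: sum.cong simp: Suc_diff_Suc)
  also have "\<dots> = (\<Sum>k<n. (-1) ^ (n - 1) * (endpoint_weight n a b k * (X k a + (-1) ^ k * X k b)))"
  proof (rule sum.cong)
    fix k assume "k \<in> {..<n}"
    then obtain j where n: "n = j + k + 1" by (metis add.commute lessThan_iff less_imp_Suc_add plus_1_eq_Suc)
    then have "n - 1 - k = j" "n + j = 2 * j + k + 1" "n - 1 = j + k" "k < n" by auto
    moreover have "(-1::real) ^ (2 * j + k + 1) = - ((-1) ^ k)" "(-1::real) ^ (j + k) = (-1) ^ j * (-1) ^ k"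
      by (simp_all add: power_add power_mult)
    ultimately show "(-1) ^ (n - 1 - k) * (peano_kernel n a b (n - 1 - k) b * X k b
           - peano_kernel n a b (n - 1 - k) a * X k a)
      = (-1) ^ (n - 1) * (endpoint_weight n a b k * (X k a + (-1) ^ k * X k b))"
      using peano_kernel_left_endpoint[OF assms, of n "n - 1 - k"] peano_kernel_right_endpoint[OF assms, of k n]
      by (cases "even k") (simp_all add: algebra_simps)
  qed simp
  finally show ?thesis by (simp add: sum_distrib_left)
qed

lemma deriv_hyp_abs_cont_on:
  assumes "deriv_hyp n a b f D" and "k \<le> n - 1"
  shows "abs_cont_on a b (D k)"
  using assms(2)
proof (induction k rule: inc_induct)
  case base
  show ?case using assms(1) by (simp add: deriv_hyp_def)
next
  case (step k)
  then show ?case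
    using assms(1) abs_cont_on_imp_continuous_on
    by (intro abs_cont_on_has_derivative_continuous[of a b "D k" "D (Suc k)"]) (auto simp: deriv_hyp_def)
qed

lemma deriv_hyp_continuous_on:
  assumes "deriv_hyp n a b f D"
  shows "continuous_on {a..b} f"
proof -
  have "continuous_on {a..b} (D 0)"
    using abs_cont_on_imp_continuous_on deriv_hyp_abs_cont_on[OF assms] by simp
  then show ?thesis
    using assms continuous_on_eq by (fastforce simp: deriv_hyp_def)
qed

lemma peano_kernel_sum_has_derivative:
  assumes "a < b" and hyp: "deriv_hyp n a b f D" and x: "x \<in> {a..b}"
    and top: "(D (n - 1) has_real_derivative D n x) (at x within {a..b})"
  shows "((\<lambda>x. \<Sum>j<n. (-1) ^ j * (peano_kernel n a b j x * D (n - 1 - j) x)) has_real_derivative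
      peano_kernel n a b 0 x * D n x - (-1) ^ n * fact n * f x) (at x within {a..b})"
proof -
  let ?P = "peano_kernel n a b"
  have "(D (n - 1 - j) has_real_derivative D (n - j) x) (at x within {a..b})" if "j < n" for j
  proof (cases j)
    case (Suc i)
    then have "Suc (n - 1 - j) < n" "Suc (n - 1 - j) = n - j" using \<open>j < n\<close> by auto
    then show ?thesis using hyp x unfolding deriv_hyp_def by metis
  qed (use top in simp)
  then have "((\<lambda>x. \<Sum>j<n. (-1) ^ j * (?P j x * D (n - 1 - j) x)) has_real_derivative
      (\<Sum>j<n. (-1) ^ j * (?P (Suc j) x * D (n - 1 - j) x + ?P j x * D (n - j) x))) (at x within {a..b})"
    by (intro DERIV_sum DERIV_cmult) (auto intro!: derivative_eq_intros peano_kernel_has_derivative)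
  also have "(\<Sum>j<n. (-1) ^ j * (?P (Suc j) x * D (n - 1 - j) x + ?P j x * D (n - j) x))
      = ?P 0 x * D n x - (-1) ^ n * fact n * f x"
    using alternating_product_telescope[of "\<lambda>j. ?P j x" "\<lambda>i. D i x" n] hyp x
    by (simp add: peano_kernel_top[OF \<open>a < b\<close>] deriv_hyp_def)
  finally show ?thesis .
qed

theorem has_integral_peano_kernel_mult:
  assumes "n \<ge> 1" and "a < b" and hyp: "deriv_hyp n a b f D"
  shows "((\<lambda>x. peano_kernel n a b 0 x * D n x) has_integral ((-1) ^ n * fact n * E_n n a b f D)) {a..b}"
proof -
  let ?P = "peano_kernel n a b"
  define \<Phi> where "\<Phi> x = (\<Sum>j<n. (-1) ^ j * (?P j x * D (n - 1 - j) x))" for x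
  have "abs_cont_on a b \<Phi>"
    unfolding \<Phi>_def
    using abs_cont_on_has_derivative_continuous[OF peano_kernel_has_derivative continuous_on_peano_kernel]
      deriv_hyp_abs_cont_on[OF hyp]
    by (intro abs_cont_on_sum abs_cont_on_mult abs_cont_on_const) auto
  have "AE x in lebesgue_on {a..b}. x \<in> {a..b}"
    by (rule AE_I2) simp
  moreover have "AE x in lebesgue_on {a..b}. (D (n - 1) has_real_derivative D n x) (at x within {a..b})"
    using hyp by (simp add: deriv_hyp_def)
  ultimately have "AE x in lebesgue_on {a..b}.
      (\<Phi> has_real_derivative ?P 0 x * D n x - (-1) ^ n * fact n * f x) (at x within {a..b})"
    unfolding \<Phi>_def[abs_def] by eventually_elim (rule peano_kernel_sum_has_derivative[OF \<open>a < b\<close> hyp])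
  then have I1: "((\<lambda>x. ?P 0 x * D n x - (-1) ^ n * fact n * f x) has_integral (\<Phi> b - \<Phi> a)) {a..b}"
    using has_integral_abs_cont_on_AE_derivative \<open>a < b\<close> \<open>abs_cont_on a b \<Phi>\<close> by simp
  have I2: "((\<lambda>x. (-1) ^ n * fact n * f x) has_integral ((-1) ^ n * fact n * integral {a..b} f)) {a..b}"
    using integrable_continuous_real[OF deriv_hyp_continuous_on[OF hyp]]
    by (intro has_integral_mult_right integrable_integral)
  have "((\<lambda>x. ?P 0 x * D n x) has_integral
      (\<Phi> b - \<Phi> a + (-1) ^ n * fact n * integral {a..b} f)) {a..b}"
    using has_integral_add[OF I1 I2] by simp
  moreover have "\<Phi> b - \<Phi> a = (-1) ^ (n - 1) * (\<Sum>k<n. endpoint_weight n a b k * (D k a + (-1) ^ k * D k b))"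
    using peano_kernel_boundary_sum[OF \<open>a < b\<close>, of n D]
    by (simp add: \<Phi>_def sum_subtractf[symmetric] algebra_simps)
  moreover have "(-1::real) ^ (n - 1) = - ((-1) ^ n)"
    using \<open>n \<ge> 1\<close> by (cases n) simp_all
  ultimately show ?thesis
    by (simp add: E_n_eq algebra_simps)
qed

lemma Linf_norm_nonneg:
  assumes "a < b"
  shows "0 \<le> Linf_norm a b g"
proof -
  have "emeasure (lebesgue_on {a..b}) (space (lebesgue_on {a..b})) = ennreal (b - a)"
    using assms by (simp add: emeasure_restrict_space)
  then have "esssup (lebesgue_on {a..b}) (\<lambda>x. ereal 0) = 0"
    using assms esssup_const[of "lebesgue_on {a..b}" "ereal 0"] by (simp add: zero_ereal_def)
  moreover have "esssup (lebesgue_on {a..b}) (\<lambda>x. ereal 0) \<le> Linf_norm a b g"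
    unfolding Linf_norm_def by (rule esssup_mono) auto
  ultimately show ?thesis by simp
qed

lemma Linf_norm_le:
  assumes "g \<in> borel_measurable (lebesgue_on {a..b})" and "\<And>x. \<bar>g x\<bar> \<le> B"
  shows "Linf_norm a b g \<le> B"
  unfolding Linf_norm_def using assms by (intro esssup_I) auto

lemma in_Linf_AE_bound:
  assumes "a < b" and "in_Linf a b g"
  shows "0 \<le> real_of_ereal (Linf_norm a b g)"
    and "AE x in lebesgue_on {a..b}. \<bar>g x\<bar> \<le> real_of_ereal (Linf_norm a b g)"
proof -
  obtain r where r: "Linf_norm a b g = ereal r" "0 \<le> r"
    using Linf_norm_nonneg[OF assms(1), of g] assms(2) unfolding in_Linf_def
    by (cases "Linf_norm a b g") auto
  then show "0 \<le> real_of_ereal (Linf_norm a b g)" by simp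
  show "AE x in lebesgue_on {a..b}. \<bar>g x\<bar> \<le> real_of_ereal (Linf_norm a b g)"
    using esssup_AE[of "\<lambda>x. ereal \<bar>g x\<bar>" "lebesgue_on {a..b}"] r(1)
    unfolding Linf_norm_def by simp
qed

lemma two_power_double: "(2::real) ^ (2 * n) = 4 ^ n"
  by (simp add: power_mult)

theorem E_n_bound:
  assumes "n \<ge> 1" and "a < b" and hyp: "deriv_hyp n a b f D"
  shows "\<bar>E_n n a b f D\<bar> \<le> real_of_ereal (Linf_norm a b (D n)) * (b - a) ^ (n + 1) / (2 ^ (2 * n) * fact n)"
proof -
  define M where "M = real_of_ereal (Linf_norm a b (D n))"
  have "in_Linf a b (D n)" using hyp by (simp add: deriv_hyp_def)
  then have "0 \<le> M" and AE_bound: "AE x in lebesgue_on {a..b}. \<bar>D n x\<bar> \<le> M"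
    unfolding M_def using in_Linf_AE_bound[OF \<open>a < b\<close>] by auto
  obtain N where "negligible N" and M: "\<And>x. x \<in> {a..b} - N \<Longrightarrow> \<bar>D n x\<bar> \<le> M"
    using AE_lebesgue_on_negligible_exception[OF AE_bound] by auto
  define g where "g x = (if x \<in> N then 0 else D n x)" for x
  have lhs: "((\<lambda>x. peano_kernel n a b 0 x * g x) has_integral ((-1) ^ n * fact n * E_n n a b f D)) {a..b}"
    using has_integral_peano_kernel_mult[OF assms]
    by (rule has_integral_spike[OF \<open>negligible N\<close>, rotated]) (simp add: g_def)
  have rhs: "((\<lambda>x. M * \<bar>peano_kernel n a b 0 x\<bar>) has_integral (M * ((b - a) ^ (n + 1) / 4 ^ n))) {a..b}"
    by (rule has_integral_mult_right[OF has_integral_abs_peano_kernel[OF \<open>a < b\<close>]])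
  have "norm (peano_kernel n a b 0 x * g x) \<le> M * \<bar>peano_kernel n a b 0 x\<bar>" if "x \<in> {a..b}" for x
  proof -
    have "\<bar>g x\<bar> \<le> M" using M[of x] \<open>0 \<le> M\<close> that by (simp add: g_def)
    then show ?thesis by (simp add: abs_mult mult.commute mult_right_mono)
  qed
  then have "norm (integral {a..b} (\<lambda>x. peano_kernel n a b 0 x * g x))
      \<le> integral {a..b} (\<lambda>x. M * \<bar>peano_kernel n a b 0 x\<bar>)"
    using lhs rhs by (intro integral_norm_bound_integral) auto
  then have "\<bar>(-1) ^ n * fact n * E_n n a b f D\<bar> \<le> M * ((b - a) ^ (n + 1) / 4 ^ n)"
    using integral_unique[OF lhs] integral_unique[OF rhs] by simp
  then show ?thesis
    unfolding two_power_double by (simp add: M_def abs_mult field_simps)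
qed

primrec iter_integral :: "real \<Rightarrow> (real \<Rightarrow> real) \<Rightarrow> nat \<Rightarrow> real \<Rightarrow> real" where
  "iter_integral a s 0 = s"
| "iter_integral a s (Suc i) = (\<lambda>t. integral {a..t} (iter_integral a s i))"

lemma iter_integral_integrable_continuous:
  assumes "s integrable_on {a..b}"
  shows "iter_integral a s i integrable_on {a..b} \<and> continuous_on {a..b} (iter_integral a s (Suc i))"
proof (induction i)
  case 0
  then show ?case using assms indefinite_integral_continuous_1 by auto
next
  case (Suc i)
  then have "iter_integral a s (Suc i) integrable_on {a..b}"
    using integrable_continuous_real by blast
  then show ?case using indefinite_integral_continuous_1 by auto
qed

lemma lipschitz_on_indefinite_integral:
  fixes s :: "real \<Rightarrow> real"
  assumes "s integrable_on {a..b}" and "\<And>t. t \<in> {a..b} \<Longrightarrow> \<bar>s t\<bar> \<le> B" and "0 \<le> B"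
  shows "B-lipschitz_on {a..b} (\<lambda>x. integral {a..x} s)"
proof -
  have step: "\<bar>integral {a..v} s - integral {a..u} s\<bar> \<le> B * (v - u)"
    if "u \<le> v" "u \<in> {a..b}" "v \<in> {a..b}" for u v
  proof -
    have "integral {a..v} s - integral {a..u} s = integral {u..v} s"
      using Henstock_Kurzweil_Integration.integral_combine[of a u v s] that
        integrable_subinterval_real[OF assms(1)] by (simp add: algebra_simps)
    also have "\<bar>\<dots>\<bar> \<le> integral {u..v} (\<lambda>t. B)"
    proof (rule integral_norm_bound_integral[of s, simplified])
      show "s integrable_on {u..v}"
        by (rule integrable_subinterval_real[OF assms(1)]) (use that in auto)
    qed (use that assms(2) in auto)
    finally show ?thesis using that by (simp add: mult.commute)
  qed
  show ?thesis
  proof (rule lipschitz_onI[OF _ \<open>0 \<le> B\<close>])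
    fix x y assume "x \<in> {a..b}" "y \<in> {a..b}"
    then show "dist (integral {a..x} s) (integral {a..y} s) \<le> B * dist x y"
      using step[of x y] step[of y x] by (cases "x \<le> y") (auto simp: dist_real_def abs_minus_commute)
  qed
qed

lemma deriv_hyp_iter_integral:
  assumes "n \<ge> 1" and s: "s \<in> borel_measurable (lebesgue_on {a..b})" and bound: "\<And>t. \<bar>s t\<bar> \<le> B"
    and "finite Z" and cont: "\<And>x. x \<in> {a..b} - Z \<Longrightarrow> isCont s x"
  shows "deriv_hyp n a b (iter_integral a s n) (\<lambda>k. iter_integral a s (n - k))"
proof -
  have "s integrable_on {a..b}"
    using bound by (intro measurable_bounded_by_integrable_imp_integrable_real[OF s, of "\<lambda>_. B"]) auto
  note iter = iter_integral_integrable_continuous[OF this]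
  have "(iter_integral a s (n - k) has_real_derivative iter_integral a s (n - Suc k) x) (at x within {a..b})"
    if "Suc k < n" "x \<in> {a..b}" for k x
  proof -
    have k: "n - k = Suc (n - Suc k)" "n - Suc k = Suc (n - Suc k - 1)" using that(1) by auto
    then have "continuous_on {a..b} (iter_integral a s (n - Suc k))"
      using iter by metis
    from integral_has_real_derivative[OF this \<open>x \<in> {a..b}\<close>] show ?thesis
      unfolding k(1) by simp
  qed
  moreover have "abs_cont_on a b (\<lambda>x. integral {a..x} s)"
    using lipschitz_on_indefinite_integral[OF \<open>s integrable_on {a..b}\<close> bound] bound[of a]
    by (intro lipschitz_on_imp_abs_cont_on[of B]) auto
  moreover have "AE x in lebesgue_on {a..b}. ((\<lambda>u. integral {a..u} s) has_real_derivative s x) (at x within {a..b})"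
  proof (rule AE_I')
    show "Z \<inter> {a..b} \<in> null_sets (lebesgue_on {a..b})"
      using \<open>finite Z\<close> negligible_finite[of "Z \<inter> {a..b}"]
      by (simp add: null_sets_restrict_space negligible_iff_null_sets)
    have "((\<lambda>u. integral {a..u} s) has_vector_derivative s x) (at x within {a..b})"
      if "x \<in> {a..b} - Z" for x
      using integral_has_vector_derivative_continuous_at[OF \<open>s integrable_on {a..b}\<close>, of x "{}"]
        cont[OF that] that continuous_at_imp_continuous_within by auto
    then show "{x \<in> space (lebesgue_on {a..b}). \<not> ((\<lambda>u. integral {a..u} s) has_real_derivative s x)
        (at x within {a..b})} \<subseteq> Z \<inter> {a..b}"
      by (auto simp: has_real_derivative_iff_has_vector_derivative)
  qed
  moreover have "in_Linf a b s"
    using Linf_norm_le[OF s bound] s by (auto simp: in_Linf_def)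
  moreover have "iter_integral a s (n - (n - 1)) = (\<lambda>x. integral {a..x} s)"
    using \<open>n \<ge> 1\<close> by simp
  ultimately show ?thesis
    unfolding deriv_hyp_def by simp
qed

lemma E_n_attains_bound:
  assumes "n \<ge> 1" and "a < b"
  obtains f D where "deriv_hyp n a b f D" and "real_of_ereal (Linf_norm a b (D n)) \<le> 1"
    and "\<bar>E_n n a b f D\<bar> = (b - a) ^ (n + 1) / (2 ^ (2 * n) * fact n)"
proof -
  let ?P = "peano_kernel n a b 0"
  define s where "s t = sgn (?P t)" for t
  define D where "D k = iter_integral a s (n - k)" for k
  have s_meas: "s \<in> borel_measurable (lebesgue_on {a..b})"
    unfolding s_def using continuous_on_peano_kernel
    by (intro measurable_compose[OF _ borel_measurable_sgn] continuous_imp_measurable_on_sets_lebesgue) auto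
  have s_bound: "\<bar>s t\<bar> \<le> 1" for t
    by (simp add: s_def abs_sgn_eq)
  have "isCont s x" if "x \<in> {a..b} - {t \<in> {a..b}. ?P t = 0}" for x
    using that continuous_on_peano_kernel[of UNIV] unfolding s_def
    by (intro isCont_sgn) (auto simp: continuous_on_eq_continuous_at)
  then have hyp: "deriv_hyp n a b (iter_integral a s n) D"
    unfolding D_def
    using deriv_hyp_iter_integral[OF \<open>n \<ge> 1\<close> s_meas s_bound finite_peano_kernel_zeros[OF \<open>a < b\<close>]]
    by blast
  moreover have "real_of_ereal (Linf_norm a b (D n)) \<le> 1"
    using Linf_norm_le[OF s_meas s_bound] Linf_norm_nonneg[OF \<open>a < b\<close>, of s]
    by (cases "Linf_norm a b s") (auto simp: D_def)
  \<comment> \<open>s = sgn P_0 turns the kernel integral into \<integral>|P_0|.\<close>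
  moreover have "\<bar>E_n n a b (iter_integral a s n) D\<bar> = (b - a) ^ (n + 1) / (2 ^ (2 * n) * fact n)"
  proof -
    have "((\<lambda>x. ?P x * s x) has_integral ((-1) ^ n * fact n * E_n n a b (iter_integral a s n) D)) {a..b}"
      using has_integral_peano_kernel_mult[OF \<open>n \<ge> 1\<close> \<open>a < b\<close> hyp] by (simp add: D_def)
    moreover have "((\<lambda>x. ?P x * s x) has_integral ((b - a) ^ (n + 1) / 4 ^ n)) {a..b}"
      using has_integral_abs_peano_kernel[OF \<open>a < b\<close>, of n] by (simp add: s_def abs_sgn[symmetric])
    ultimately have "(-1) ^ n * fact n * E_n n a b (iter_integral a s n) D = (b - a) ^ (n + 1) / 4 ^ n"
      by (rule has_integral_unique)
    then have "\<bar>(-1) ^ n * fact n * E_n n a b (iter_integral a s n) D\<bar> = \<bar>(b - a) ^ (n + 1) / 4 ^ n\<bar>"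
      by simp
    then have "fact n * \<bar>E_n n a b (iter_integral a s n) D\<bar> = (b - a) ^ (n + 1) / 4 ^ n"
      using \<open>a < b\<close> by (simp add: abs_mult)
    then show ?thesis unfolding two_power_double by (simp add: field_simps)
  qed
  ultimately show ?thesis using that by blast
qed

theorem E_n_bound_sharp:
  assumes "n \<ge> 1" and "a < b" and C: "C < 1 / (2 ^ (2 * n) * fact n)"
  shows "\<exists>f D. deriv_hyp n a b f D \<and>
    \<bar>E_n n a b f D\<bar> > C * real_of_ereal (Linf_norm a b (D n)) * (b - a) ^ (n + 1)"
proof -
  obtain f D where hyp: "deriv_hyp n a b f D" and "real_of_ereal (Linf_norm a b (D n)) \<le> 1"
    and E: "\<bar>E_n n a b f D\<bar> = (b - a) ^ (n + 1) / (2 ^ (2 * n) * fact n)"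
    using E_n_attains_bound[OF assms(1,2)] .
  define L where "L = real_of_ereal (Linf_norm a b (D n))"
  have "0 \<le> L" "L \<le> 1"
    using hyp in_Linf_AE_bound(1)[OF \<open>a < b\<close>] \<open>real_of_ereal (Linf_norm a b (D n)) \<le> 1\<close>
    by (auto simp: L_def deriv_hyp_def)
  have "0 < (b - a) ^ (n + 1)" using \<open>a < b\<close> by simp
  have "C * L * (b - a) ^ (n + 1) < \<bar>E_n n a b f D\<bar>"
  proof (cases "C \<le> 0")
    case True
    then have "C * L * (b - a) ^ (n + 1) \<le> 0"
      using \<open>0 \<le> L\<close> \<open>0 < (b - a) ^ (n + 1)\<close> by (simp add: mult_nonpos_nonneg)
    moreover have "0 < \<bar>E_n n a b f D\<bar>"
      using \<open>0 < (b - a) ^ (n + 1)\<close> E by simp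
    ultimately show ?thesis by linarith
  next
    case False
    then have "C * L * (b - a) ^ (n + 1) \<le> C * (b - a) ^ (n + 1)"
      using \<open>L \<le> 1\<close> \<open>0 < (b - a) ^ (n + 1)\<close>
      by (intro mult_right_mono) (auto intro: mult_left_le)
    also have "\<dots> < (b - a) ^ (n + 1) / (2 ^ (2 * n) * fact n)"
      using mult_strict_right_mono[OF C \<open>0 < (b - a) ^ (n + 1)\<close>] by simp
    finally show ?thesis using E by simp
  qed
  then show ?thesis using hyp unfolding L_def by blast
qed

theorem corollary2p5:
  fixes n :: nat and a b :: real
  assumes "n \<ge> 1" and "a < b"
  shows "(\<forall>f D. deriv_hyp n a b f D \<longrightarrow>
            \<bar>E_n n a b f D\<bar> \<le> real_of_ereal (Linf_norm a b (D n)) * (b - a) ^ (n + 1) / (2 ^ (2 * n) * fact n))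
       \<and> (\<forall>C::real. C < 1 / (2 ^ (2 * n) * fact n) \<longrightarrow>
            (\<exists>f D. deriv_hyp n a b f D \<and>
               \<bar>E_n n a b f D\<bar> > C * real_of_ereal (Linf_norm a b (D n)) * (b - a) ^ (n + 1)))"
  using E_n_bound[OF assms] E_n_bound_sharp[OF assms] by blast

end
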